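(* Let $X$ be a second countable locally compact Hausdorff space equipped with a compatible proper metric $d$ (closed balls are compact), fix $o\in X$, and let $B_o(r)$ denote the closed ball of radius $r$ about $o$. Let $\mathcal{U}$ be a nonprincipal ultrafilter over $\mathbb{N}$, let $(f_n)_{n\in\mathbb{N}}$ be a norm-bounded sequence in $C_0(X)$, and let $f_{\mathcal{U}}(x):=\lim_{\mathcal{U}}f_n(x)$ for $x\in X$. The following are equivalent: (1) $(f_n)$ is $\mathcal{U}$-equicontinuous on bounded sets: for every $r,\varepsilon>0$ there is $\delta>0$ such that $\{n\in\mathbb{N}: \forall s,t\in B_o(r),\ d(s,t)<\delta\Rightarrow|f_n(s)-f_n(t)|<\varepsilon\}\in\mathcal{U}$; (2) $(f_n)$ is $\mathcal{U}$-strict convergent to $f_{\mathcal{U}}$: for every $g\in C_0(X)$ and every $\varepsilon>0$, $\{n\in\mathbb{N}:\|f_ng-f_{\mathcal{U}}g\|_\infty<\varepsilon\}\in\mathcal{U}$.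
   Context: $\lim_{\mathcal{U}}$ denotes the limit along the ultrafilter $\mathcal{U}$: $c=\lim_{\mathcal{U}}c_n$ iff for every $\varepsilon>0$, $\{n:|c_n-c|<\varepsilon\}\in\mathcal{U}$; every bounded sequence of complex numbers has a unique $\mathcal{U}$-limit. *)

theory Defs
  imports "HOL-Analysis.Analysis"
begin

text \<open>Ultrafilters on nat, represented as HOL filters: a set A is in U iff eventually (\<lambda>n. n \<in> A) U.\<close>
definition ultrafilter :: "'a filter \<Rightarrow> bool" where
  "ultrafilter F \<longleftrightarrow> F \<noteq> bot \<and> (\<forall>P. eventually P F \<or> eventually (\<lambda>x. \<not> P x) F)"

definition nonprincipal :: "'a filter \<Rightarrow> bool" where
  "nonprincipal F \<longleftrightarrow> (\<forall>a. \<not> eventually (\<lambda>x. x = a) F)"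

definition C0 :: "('a::topological_space \<Rightarrow> complex) set" where
  "C0 = {f. continuous_on UNIV f \<and> (\<forall>e>0. compact {x. norm (f x) \<ge> e})}"

definition sup_norm :: "('a \<Rightarrow> complex) \<Rightarrow> real" where
  "sup_norm h = (SUP x. norm (h x))"

text \<open>Limit along a filter (unique for proper filters, Hausdorff codomain).\<close>
definition ulim :: "'b filter \<Rightarrow> ('b \<Rightarrow> complex) \<Rightarrow> complex" where
  "ulim F c = Lim F c"

end

theory Submission
  imports Defs
begin

text \<open>
  Strict convergence against every g \<in> C0 amounts to uniform \<U>-convergence of the f n to
  their pointwise \<U>-limit on every closed ball: a plateau function equal to 1 on the ball
  is in C0, and conversely every g \<in> C0 is uniformly small outside some ball, while all
  functions involved are uniformly bounded. On a compact ball, \<U>-equicontinuity together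
  with pointwise \<U>-convergence gives uniform \<U>-convergence (compare on a finite \<delta>-net),
  and uniform \<U>-convergence gives \<U>-equicontinuity by comparison with a single,
  uniformly continuous, f n.
\<close>

lemma tendsto_ulim:
  assumes "ultrafilter F" "compact K" "eventually (\<lambda>n. c n \<in> K) F"
  shows "(c \<longlongrightarrow> ulim F c) F"
proof -
  have nontriv: "F \<noteq> bot" using assms(1) unfolding ultrafilter_def by auto
  then have "filtermap c F \<noteq> bot" by (simp add: filtermap_bot_iff)
  moreover have "eventually (\<lambda>x. x \<in> K) (filtermap c F)"
    using assms(3) by (simp add: eventually_filtermap)
  ultimately obtain L where L: "inf (nhds L) (filtermap c F) \<noteq> bot"
    using assms(2) unfolding compact_filter by blast
  have "(c \<longlongrightarrow> L) F"
  proof (rule topological_tendstoI)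
    fix S assume S: "open S" "L \<in> S"
    show "eventually (\<lambda>n. c n \<in> S) F"
    proof (rule ccontr)
      assume "\<not> eventually (\<lambda>n. c n \<in> S) F"
      then have "eventually (\<lambda>n. c n \<notin> S) F"
        using assms(1) unfolding ultrafilter_def by blast
      then have "eventually (\<lambda>x. x \<notin> S) (filtermap c F)"
        by (simp add: eventually_filtermap)
      moreover have "eventually (\<lambda>x. x \<in> S) (nhds L)"
        using S by (simp add: eventually_nhds_in_open)
      ultimately have "eventually (\<lambda>_. False) (inf (nhds L) (filtermap c F))"
        unfolding eventually_inf by blast
      with L show False by (simp add: eventually_False)
    qed
  qed
  then show ?thesis unfolding ulim_def using tendsto_Lim nontriv by metis
qed

lemma bounded_range_C0:
  assumes "f \<in> C0" shows "bounded (range f)"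
proof -
  let ?K = "{x. norm (f x) \<ge> 1}"
  have "compact ?K" "continuous_on UNIV f" using assms unfolding C0_def by auto
  then have "bounded (f ` ?K)"
    by (meson compact_continuous_image continuous_on_subset compact_imp_bounded top_greatest)
  moreover have "bounded (f ` (- ?K))"
    by (rule boundedI[of _ 1]) auto
  ultimately have "bounded (f ` ?K \<union> f ` (- ?K))" by simp
  then show ?thesis by (rule bounded_subset) auto
qed

lemma C0_small_outside_cball:
  assumes "g \<in> C0" "\<eta> > 0"
  obtains R where "R > 0" "\<And>x. x \<notin> cball x0 R \<Longrightarrow> norm (g x) < \<eta>"
proof -
  have "bounded {x. \<eta> \<le> norm (g x)}"
    using assms compact_imp_bounded unfolding C0_def by auto
  then obtain R0 where "\<forall>y\<in>{x. \<eta> \<le> norm (g x)}. dist x0 y \<le> R0"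
    using bounded_any_center by metis
  then show ?thesis using that[of "max R0 1"] by (force simp: not_le)
qed

lemma plateau_in_C0:
  fixes x0 :: "'a::metric_space"
  assumes proper: "\<And>x r. compact (cball (x::'a) r)"
  obtains g where "g \<in> C0" "\<And>x. norm (g x) \<le> 1" "\<And>x. x \<in> cball x0 r \<Longrightarrow> g x = 1"
proof
  define g where "g x = complex_of_real (max 0 (min 1 (r + 1 - dist x0 x)))" for x
  have cont: "continuous_on UNIV g" unfolding g_def by (intro continuous_intros)
  show "g \<in> C0"
    unfolding C0_def
  proof (intro CollectI conjI allI impI cont)
    fix e :: real assume "e > 0"
    then have "{x. e \<le> norm (g x)} \<subseteq> cball x0 (r + 1)"
      unfolding g_def by (auto simp: max_def min_def split: if_splits)
    moreover have "closed {x. e \<le> norm (g x)}"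
      by (intro closed_Collect_le continuous_intros cont)
    ultimately show "compact {x. e \<le> norm (g x)}"
      by (metis compact_Int_closed proper Int_absorb1)
  qed
  show "norm (g x) \<le> 1" for x unfolding g_def by simp
  show "g x = 1" if "x \<in> cball x0 r" for x using that unfolding g_def by simp
qed

lemma norm_le_sup_norm:
  assumes "\<And>x. norm (h x) \<le> B" shows "norm (h x) \<le> sup_norm h"
  unfolding sup_norm_def by (rule cSUP_upper) (auto intro!: bdd_aboveI2 assms)

lemma sup_norm_le:
  assumes "\<And>x. norm (h x) \<le> c" shows "sup_norm h \<le> c"
  unfolding sup_norm_def by (rule cSUP_least) (use assms in auto)

lemma norm_mult_diff_right:
  "norm (a * c - b * c) = norm (a - b) * norm (c :: 'b::real_normed_field)"
  by (simp add: left_diff_distrib[symmetric] norm_mult)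

lemma norm_diff_le_sup_norm_mult:
  assumes "\<And>x. norm (f x) \<le> B" "\<And>x. norm (h x) \<le> B" "\<And>x. norm (g x) \<le> 1"
    and "g x = 1"
  shows "norm (f x - h x) \<le> sup_norm (\<lambda>x. f x * g x - h x * g x)"
proof -
  have "norm (f y * g y - h y * g y) \<le> 2 * B" for y
  proof -
    have "norm (f y - h y) * norm (g y) \<le> 2 * B * 1"
      using norm_triangle_ineq4[of "f y" "h y"] assms(1-3)[of y] order_trans[OF norm_ge_zero assms(1)]
      by (intro mult_mono) auto
    then show ?thesis by (simp add: norm_mult_diff_right)
  qed
  then have "norm (f x * g x - h x * g x) \<le> sup_norm (\<lambda>x. f x * g x - h x * g x)"
    by (rule norm_le_sup_norm)
  with \<open>g x = 1\<close> show ?thesis by simp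
qed

lemma norm_diff_triangle3:
  "norm (a - d) \<le> norm (a - b) + norm (b - c) + norm (c - (d::'a::real_normed_vector))"
  using norm_triangle_ineq[of "a - b" "b - c"] norm_triangle_ineq[of "a - c" "c - d"] by simp

lemma eventually_uniform_if_equicontinuous:
  fixes f :: "'i \<Rightarrow> 'a::metric_space \<Rightarrow> 'b::real_normed_vector"
  assumes "compact K" "F \<noteq> bot"
    and equicont: "\<And>\<epsilon>. \<epsilon> > 0 \<Longrightarrow> \<exists>\<delta>>0. eventually (\<lambda>n. \<forall>s\<in>K. \<forall>t\<in>K.
            dist s t < \<delta> \<longrightarrow> norm (f n s - f n t) < \<epsilon>) F"
    and lim: "\<And>x. x \<in> K \<Longrightarrow> ((\<lambda>n. f n x) \<longlongrightarrow> h x) F"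
    and "\<epsilon> > 0"
  shows "eventually (\<lambda>n. \<forall>x\<in>K. norm (f n x - h x) < \<epsilon>) F"
proof -
  define e where "e = \<epsilon> / 3"
  have "e > 0" using \<open>\<epsilon> > 0\<close> unfolding e_def by simp
  then obtain \<delta> where "\<delta> > 0" and close: "eventually (\<lambda>n. \<forall>s\<in>K. \<forall>t\<in>K.
      dist s t < \<delta> \<longrightarrow> norm (f n s - f n t) < e) F"
    using equicont by blast
  have lim_close: "norm (h s - h t) \<le> e" if "s \<in> K" "t \<in> K" "dist s t < \<delta>" for s t
  proof (rule Lim_norm_ubound)
    show "((\<lambda>n. f n s - f n t) \<longlongrightarrow> h s - h t) F" using that by (intro tendsto_diff lim)
    show "eventually (\<lambda>n. norm (f n s - f n t) \<le> e) F"
      using close by eventually_elim (meson that less_imp_le)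
  qed (use \<open>F \<noteq> bot\<close> in \<open>simp add: trivial_limit_def\<close>)
  have "K \<subseteq> (\<Union>t\<in>K. ball t \<delta>)" using \<open>\<delta> > 0\<close> by auto
  then obtain T where T: "T \<subseteq> K" "finite T" "K \<subseteq> (\<Union>t\<in>T. ball t \<delta>)"
    by (metis compactE_image open_ball \<open>compact K\<close>)
  have "eventually (\<lambda>n. \<forall>t\<in>T. norm (f n t - h t) < e) F"
    using T lim \<open>e > 0\<close> by (intro eventually_ball_finite) (auto simp: tendsto_iff dist_norm)
  with close show ?thesis
  proof eventually_elim
    case (elim n)
    show ?case
    proof
      fix x assume "x \<in> K"
      then obtain t where t: "t \<in> T" "dist t x < \<delta>" using T(3) by auto
      have "norm (f n x - f n t) < e" using elim t T(1) \<open>x \<in> K\<close> by (metis dist_commute subsetD)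
      moreover have "norm (f n t - h t) < e" using elim t(1) by blast
      moreover have "norm (h t - h x) \<le> e" using lim_close t T(1) \<open>x \<in> K\<close> by blast
      ultimately have "norm (f n x - h x) < 3 * e"
        using norm_diff_triangle3[of "f n x" "h x" "f n t" "h t"] by linarith
      then show "norm (f n x - h x) < \<epsilon>" unfolding e_def by simp
    qed
  qed
qed

lemma equicontinuous_if_eventually_uniform:
  fixes f :: "'i \<Rightarrow> 'a::metric_space \<Rightarrow> 'b::real_normed_vector"
  assumes "compact K" "F \<noteq> bot"
    and cont: "\<And>n. continuous_on K (f n)"
    and unif: "\<And>\<epsilon>. \<epsilon> > 0 \<Longrightarrow> eventually (\<lambda>n. \<forall>x\<in>K. norm (f n x - h x) < \<epsilon>) F"
    and "\<epsilon> > 0"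
  shows "\<exists>\<delta>>0. eventually (\<lambda>n. \<forall>s\<in>K. \<forall>t\<in>K.
            dist s t < \<delta> \<longrightarrow> norm (f n s - f n t) < \<epsilon>) F"
proof -
  define e where "e = \<epsilon> / 5"
  have "e > 0" using \<open>\<epsilon> > 0\<close> unfolding e_def by simp
  then obtain m where m: "\<forall>x\<in>K. norm (f m x - h x) < e"
    using eventually_happens'[OF \<open>F \<noteq> bot\<close> unif] by blast
  have "uniformly_continuous_on K (f m)"
    using compact_uniformly_continuous cont \<open>compact K\<close> by blast
  then obtain \<delta> where "\<delta> > 0"
    and \<delta>: "\<And>t s. t \<in> K \<Longrightarrow> s \<in> K \<Longrightarrow> dist s t < \<delta> \<Longrightarrow> dist (f m s) (f m t) < e"
    using \<open>e > 0\<close> by (rule uniformly_continuous_onE) blast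
  have "eventually (\<lambda>n. \<forall>s\<in>K. \<forall>t\<in>K. dist s t < \<delta> \<longrightarrow> norm (f n s - f n t) < \<epsilon>) F"
    using unif[OF \<open>e > 0\<close>]
  proof eventually_elim
    case (elim n)
    show ?case
    proof (intro ballI impI)
      fix s t assume st: "s \<in> K" "t \<in> K" "dist s t < \<delta>"
      have "norm (h s - f m s) < e" "norm (f m t - h t) < e"
        using m st(1,2) by (simp_all add: norm_minus_commute)
      moreover have "norm (f m s - f m t) < e" using \<delta>[of t s] st by (simp add: dist_norm)
      ultimately have "norm (h s - h t) < 3 * e"
        using norm_diff_triangle3[of "h s" "h t" "f m s" "f m t"] by linarith
      moreover have "norm (f n s - h s) < e" "norm (h t - f n t) < e"
        using elim st(1,2) by (simp_all add: norm_minus_commute)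
      ultimately show "norm (f n s - f n t) < \<epsilon>"
        using norm_diff_triangle3[of "f n s" "f n t" "h s" "h t"] unfolding e_def by linarith
    qed
  qed
  with \<open>\<delta> > 0\<close> show ?thesis by blast
qed

lemma strict_convergence_if_equicontinuous_on_cballs:
  fixes f :: "'i \<Rightarrow> 'a::metric_space \<Rightarrow> complex"
  assumes proper: "\<And>x r. compact (cball (x::'a) r)" and "F \<noteq> bot"
    and f_bound: "\<And>n x. norm (f n x) \<le> B" and h_bound: "\<And>x. norm (h x) \<le> B"
    and lim: "\<And>x. ((\<lambda>n. f n x) \<longlongrightarrow> h x) F"
    and equicont: "\<forall>r>0. \<forall>\<epsilon>>0. \<exists>\<delta>>0. eventually (\<lambda>n.
            \<forall>s\<in>cball x0 r. \<forall>t\<in>cball x0 r. dist s t < \<delta> \<longrightarrow> norm (f n s - f n t) < \<epsilon>) F"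
  shows "\<forall>g\<in>C0. \<forall>\<epsilon>>0. eventually (\<lambda>n. sup_norm (\<lambda>x. f n x * g x - h x * g x) < \<epsilon>) F"
proof (intro ballI allI impI)
  fix g :: "'a \<Rightarrow> complex" and \<epsilon> :: real
  assume "g \<in> C0" "\<epsilon> > 0"
  obtain M where M: "M > 0" "\<And>x. norm (g x) \<le> M"
    using bounded_range_C0[OF \<open>g \<in> C0\<close>] unfolding bounded_pos by blast
  have "B \<ge> 0" using h_bound norm_ge_zero order_trans by blast
  with \<open>\<epsilon> > 0\<close> have "\<epsilon> / (4 * (B + 1)) > 0" by simp
  then obtain R where "R > 0" and R: "\<And>x. x \<notin> cball x0 R \<Longrightarrow> norm (g x) < \<epsilon> / (4 * (B + 1))"
    using C0_small_outside_cball[OF \<open>g \<in> C0\<close>] by blast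
  have "eventually (\<lambda>n. \<forall>x\<in>cball x0 R. norm (f n x - h x) < \<epsilon> / (2 * M)) F"
    using \<open>\<epsilon> > 0\<close> M(1) equicont \<open>R > 0\<close>
    by (intro eventually_uniform_if_equicontinuous[OF proper \<open>F \<noteq> bot\<close> _ lim]) auto
  then show "eventually (\<lambda>n. sup_norm (\<lambda>x. f n x * g x - h x * g x) < \<epsilon>) F"
  proof eventually_elim
    case (elim n)
    have "norm (f n x * g x - h x * g x) \<le> \<epsilon> / 2" for x
    proof (cases "x \<in> cball x0 R")
      case True
      then have "norm (f n x - h x) \<le> \<epsilon> / (2 * M)" using elim less_imp_le by blast
      then have "norm (f n x - h x) * norm (g x) \<le> \<epsilon> / (2 * M) * M"
        using M \<open>\<epsilon> > 0\<close> by (intro mult_mono) auto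
      then show ?thesis using M(1) by (simp add: norm_mult_diff_right)
    next
      case False
      have "norm (f n x - h x) \<le> 2 * B"
        using norm_triangle_ineq4[of "f n x" "h x"] f_bound[of n x] h_bound[of x] by simp
      then have "norm (f n x - h x) * norm (g x) \<le> 2 * B * (\<epsilon> / (4 * (B + 1)))"
        using R[OF False] \<open>B \<ge> 0\<close> by (intro mult_mono) auto
      also have "\<dots> \<le> \<epsilon> / 2" using \<open>B \<ge> 0\<close> \<open>\<epsilon> > 0\<close> by (simp add: field_simps)
      finally show ?thesis by (simp add: norm_mult_diff_right)
    qed
    then have "sup_norm (\<lambda>x. f n x * g x - h x * g x) \<le> \<epsilon> / 2" by (rule sup_norm_le)
    then show ?case using \<open>\<epsilon> > 0\<close> by simp
  qed
qed

lemma equicontinuous_on_cballs_if_strict_convergence: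
  fixes f :: "'i \<Rightarrow> 'a::metric_space \<Rightarrow> complex"
  assumes proper: "\<And>x r. compact (cball (x::'a) r)" and "F \<noteq> bot"
    and f_C0: "\<And>n. f n \<in> C0"
    and f_bound: "\<And>n x. norm (f n x) \<le> B" and h_bound: "\<And>x. norm (h x) \<le> B"
    and strict: "\<forall>g\<in>C0. \<forall>\<epsilon>>0.
            eventually (\<lambda>n. sup_norm (\<lambda>x. f n x * g x - h x * g x) < \<epsilon>) F"
  shows "\<forall>r>0. \<forall>\<epsilon>>0. \<exists>\<delta>>0. eventually (\<lambda>n. \<forall>s\<in>cball x0 r. \<forall>t\<in>cball x0 r.
            dist s t < \<delta> \<longrightarrow> norm (f n s - f n t) < \<epsilon>) F"
proof (intro allI impI)
  fix r \<epsilon> :: real assume "r > 0" "\<epsilon> > 0"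
  obtain g where g: "g \<in> C0" "\<And>x. norm (g x) \<le> 1" "\<And>x. x \<in> cball x0 r \<Longrightarrow> g x = 1"
    using plateau_in_C0[OF proper] by blast
  have unif: "eventually (\<lambda>n. \<forall>x\<in>cball x0 r. norm (f n x - h x) < e) F" if "e > 0" for e
  proof -
    have "eventually (\<lambda>n. sup_norm (\<lambda>x. f n x * g x - h x * g x) < e) F"
      using strict g(1) that by blast
    then show ?thesis
    proof eventually_elim
      case (elim n)
      show ?case
      proof
        fix x assume "x \<in> cball x0 r"
        then show "norm (f n x - h x) < e"
          using norm_diff_le_sup_norm_mult[of "f n" B h g x, OF f_bound h_bound g(2) g(3)] elim
          by linarith
      qed
    qed
  qed
  have "continuous_on (cball x0 r) (f n)" for n
    using f_C0[of n] unfolding C0_def by (auto intro: continuous_on_subset)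
  then show "\<exists>\<delta>>0. eventually (\<lambda>n. \<forall>s\<in>cball x0 r. \<forall>t\<in>cball x0 r.
      dist s t < \<delta> \<longrightarrow> norm (f n s - f n t) < \<epsilon>) F"
    by (rule equicontinuous_if_eventually_uniform[OF proper \<open>F \<noteq> bot\<close> _ unif \<open>\<epsilon> > 0\<close>])
qed

theorem proposition3p2:
  fixes x0 :: "'a::{metric_space, second_countable_topology}"
    and U :: "nat filter"
    and f :: "nat \<Rightarrow> 'a \<Rightarrow> complex"
  assumes locally_compact: "locally compact (UNIV :: 'a set)"
    and proper: "\<And>x r. compact (cball (x::'a) r)"
    and U: "ultrafilter U" "nonprincipal U"
    and fC0: "\<And>n. f n \<in> C0"
    and bdd: "\<exists>B. \<forall>n. sup_norm (f n) \<le> B"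
  shows "(\<forall>r>0. \<forall>\<epsilon>>0. \<exists>\<delta>>0. eventually (\<lambda>n. \<forall>s\<in>cball x0 r. \<forall>t\<in>cball x0 r.
            dist s t < \<delta> \<longrightarrow> norm (f n s - f n t) < \<epsilon>) U)
     \<longleftrightarrow>
     (\<forall>g\<in>C0. \<forall>\<epsilon>>0. eventually (\<lambda>n.
            sup_norm (\<lambda>x. f n x * g x - ulim U (\<lambda>m. f m x) * g x) < \<epsilon>) U)"
proof -
  obtain B where B: "\<forall>n. sup_norm (f n) \<le> B" using bdd by blast
  have f_bound: "norm (f n x) \<le> B" for n x
  proof -
    obtain C where "\<forall>y\<in>range (f n). norm y \<le> C"
      using bounded_range_C0[OF fC0] unfolding bounded_iff by blast
    then have "norm (f n x) \<le> sup_norm (f n)" by (intro norm_le_sup_norm[of _ C]) simp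
    with B show ?thesis by (meson order_trans)
  qed
  define h where "h x = ulim U (\<lambda>m. f m x)" for x
  have "U \<noteq> bot" using U(1) unfolding ultrafilter_def by simp
  have lim: "((\<lambda>n. f n x) \<longlongrightarrow> h x) U" for x
    unfolding h_def using f_bound by (intro tendsto_ulim[OF U(1) compact_cball[of 0 B]]) simp
  have h_bound: "norm (h x) \<le> B" for x
    by (rule Lim_norm_ubound[OF _ lim]) (use \<open>U \<noteq> bot\<close> f_bound in \<open>auto simp: trivial_limit_def\<close>)
  show ?thesis unfolding h_def[symmetric]
    by (rule iffI[OF strict_convergence_if_equicontinuous_on_cballs[OF proper \<open>U \<noteq> bot\<close> f_bound h_bound lim]
          equicontinuous_on_cballs_if_strict_convergence[OF proper \<open>U \<noteq> bot\<close> fC0 f_bound h_bound]])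
qed

end
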